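(* Consider smoothed HS-$k$ with ground set $\mathcal B$ and collection $\mathcal C=\{C_1,\dots,C_n\}$, where each set weight $w_i$ is drawn independently from a distribution with density $f_i:[0,1]\to[0,\phi]$, and let $B=\max_{b\in\mathcal B}|\{C_i\in\mathcal C:b\in C_i\}|$. Then the expected maximum number of iterations of local search (over all initial feasible subsets and all improving sequences) is $O(3^{kB}|\mathcal B|^kn^2\phi)$, with an absolute hidden constant.
   Context: HS-$k$ (Hitting Set): given a finite ground set $\mathcal B$, a collection $\mathcal C=\{C_1,\dots,C_n\}$ of subsets of $\mathcal B$ with weights $w_i$, and an integer $m$, a feasible solution is $S\subseteq\mathcal B$ with $|S|\le m$; its weight is $\sum_{i:\,S\cap C_i\ne\emptyset}w_i$, to be maximized. Neighbours of $S$ are feasible subsets obtained by adding some $k_1$ elements and removing some $k_2$ elements with $k_1+k_2\le k$. A solution is a feasible subset with no neighbour of strictly larger weight; local search repeatedly moves to a strictly better neighbour. *)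

theory Defs
  imports "HOL-Probability.Probability"
begin

definition hs_feasible :: "nat set \<Rightarrow> nat \<Rightarrow> nat set \<Rightarrow> bool" where
  "hs_feasible Bs m S \<longleftrightarrow> S \<subseteq> Bs \<and> card S \<le> m"

definition hs_weight :: "(nat \<Rightarrow> nat set) \<Rightarrow> nat \<Rightarrow> (nat \<Rightarrow> real) \<Rightarrow> nat set \<Rightarrow> real" where
  "hs_weight C n w S = (\<Sum>i\<in>{i. i < n \<and> S \<inter> C i \<noteq> {}}. w i)"

definition hs_neighbour :: "nat set \<Rightarrow> nat \<Rightarrow> nat \<Rightarrow> nat set \<Rightarrow> nat set \<Rightarrow> bool" where
  "hs_neighbour Bs m k S S' \<longleftrightarrow> hs_feasible Bs m S' \<and> card (S' - S) + card (S - S') \<le> k"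

definition hs_improving_seq ::
  "nat set \<Rightarrow> (nat \<Rightarrow> nat set) \<Rightarrow> nat \<Rightarrow> nat \<Rightarrow> nat \<Rightarrow> (nat \<Rightarrow> real) \<Rightarrow> nat set list \<Rightarrow> bool" where
  "hs_improving_seq Bs C n m k w xs \<longleftrightarrow> xs \<noteq> [] \<and> hs_feasible Bs m (hd xs) \<and>
     (\<forall>j. Suc j < length xs \<longrightarrow> hs_neighbour Bs m k (xs ! j) (xs ! Suc j)
        \<and> hs_weight C n w (xs ! j) < hs_weight C n w (xs ! Suc j))"

definition hs_max_iter ::
  "nat set \<Rightarrow> (nat \<Rightarrow> nat set) \<Rightarrow> nat \<Rightarrow> nat \<Rightarrow> nat \<Rightarrow> (nat \<Rightarrow> real) \<Rightarrow> ennreal" where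
  "hs_max_iter Bs C n m k w =
     (\<Squnion>xs\<in>{xs. hs_improving_seq Bs C n m k w xs}. of_nat (length xs - 1))"

definition hs_B :: "nat set \<Rightarrow> (nat \<Rightarrow> nat set) \<Rightarrow> nat \<Rightarrow> nat" where
  "hs_B Bs C n = Max (insert 0 ((\<lambda>b. card {i. i < n \<and> b \<in> C i}) ` Bs))"

end

theory Submission
  imports Defs
begin

text \<open>An improving sequence never repeats its set of hit sets, so it makes T < 2^n moves, and for
  weights in [0,1] its total gain is at most n; hence T \<ge> 2^j forces a move of gain in (0, n/2^j].
  The gain of a move changing at most k elements is a \<bullet> w for one of at most |B|^k 3^(kB) sign
  vectors a, and as some coefficient is \<plusminus>1 and that weight has density at most \<phi>, the probability
  that 0 < a \<bullet> w \<le> \<epsilon> is at most \<phi> \<epsilon>. Bounding T by the sum of the 2^j \<le> T over j < n gives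
  E[T] \<le> \<Sum>j<n. 2^j |B|^k 3^(kB) \<phi> n / 2^j = 3^(kB) |B|^k n^2 \<phi>.\<close>

definition hit_sets :: "(nat \<Rightarrow> nat set) \<Rightarrow> nat \<Rightarrow> nat set \<Rightarrow> nat set" where
  "hit_sets C n S = {i. i < n \<and> C i \<inter> S \<noteq> {}}"

definition gain_vector :: "(nat \<Rightarrow> nat set) \<Rightarrow> nat \<Rightarrow> nat set \<Rightarrow> nat set \<Rightarrow> nat \<Rightarrow> real" where
  "gain_vector C n S S' i =
     (if i < n then of_bool (C i \<inter> S' \<noteq> {}) - of_bool (C i \<inter> S \<noteq> {}) else 0)"

definition sign_vectors_on :: "nat set \<Rightarrow> (nat \<Rightarrow> real) set" where
  "sign_vectors_on H = {a. \<forall>i. a i \<in> {-1, 0, 1} \<and> (i \<notin> H \<longrightarrow> a i = 0)}"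

text \<open>A move from S to S' changes the hit status only of the sets meeting the symmetric difference
  D, so its gain is \<Sum>i<n. a i * w i for a sign vector a supported on those sets.\<close>
definition gain_vectors :: "nat set \<Rightarrow> (nat \<Rightarrow> nat set) \<Rightarrow> nat \<Rightarrow> nat \<Rightarrow> (nat \<Rightarrow> real) set" where
  "gain_vectors Bs C n k =
     (\<Union>D\<in>{D. D \<subseteq> Bs \<and> D \<noteq> {} \<and> card D \<le> k}. sign_vectors_on (hit_sets C n D))"

definition small_gain :: "nat \<Rightarrow> (nat \<Rightarrow> real) \<Rightarrow> real \<Rightarrow> (nat \<Rightarrow> real) set" where
  "small_gain n a \<epsilon> = {w. 0 < (\<Sum>i<n. a i * w i) \<and> (\<Sum>i<n. a i * w i) \<le> \<epsilon>}"

lemma exists_small_increment: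
  fixes W :: "nat \<Rightarrow> real"
  assumes "0 < T" "W T - W 0 \<le> L"
  shows "\<exists>s<T. W (Suc s) - W s \<le> L / T"
proof (rule ccontr)
  assume "\<not> ?thesis"
  then have "(\<Sum>s<T. L / T) < (\<Sum>s<T. W (Suc s) - W s)"
    using assms(1) by (intro sum_strict_mono) auto
  also have "\<dots> = W T - W 0"
    by (rule sum_lessThan_telescope)
  finally show False
    using assms by simp
qed

lemma le_sum_powers_of_two_below:
  "T < 2 ^ n \<Longrightarrow> T \<le> (\<Sum>j<n. if 2 ^ j \<le> T then 2 ^ j else 0 :: nat)"
proof (induction n arbitrary: T)
  case (Suc n)
  show ?case
  proof (cases "T < 2 ^ n")
    case True
    then show ?thesis
      using Suc.IH by simp
  next
    case False
    have "(2::nat) ^ n - 1 \<le> (\<Sum>j<n. if (2::nat) ^ j \<le> 2 ^ n - 1 then 2 ^ j else 0)"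
      by (rule Suc.IH) simp
    also have "\<dots> \<le> (\<Sum>j<n. if 2 ^ j \<le> T then 2 ^ j else 0)"
      using False by (intro sum_mono) auto
    finally show ?thesis
      using False Suc.prems by simp
  qed
qed simp

lemma finite_and_card_sign_vectors_on:
  assumes "finite H"
  shows "finite (sign_vectors_on H)" "card (sign_vectors_on H) \<le> 3 ^ card H"
proof -
  have inj: "inj_on (\<lambda>a. restrict a H) (sign_vectors_on H)"
  proof (rule inj_onI, rule ext)
    fix a b i assume "a \<in> sign_vectors_on H" "b \<in> sign_vectors_on H" "restrict a H = restrict b H"
    then show "a i = b i"
      by (cases "i \<in> H") (auto simp: sign_vectors_on_def dest: fun_cong[of _ _ i])
  qed
  have into: "(\<lambda>a. restrict a H) ` sign_vectors_on H \<subseteq> PiE H (\<lambda>_. {-1, 0, 1 :: real})"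
    by (auto simp: sign_vectors_on_def)
  have fin: "finite (PiE H (\<lambda>_. {-1, 0, 1 :: real}))"
    using assms by (simp add: finite_PiE)
  show "finite (sign_vectors_on H)"
    by (rule inj_on_finite[OF inj into fin])
  have "card (sign_vectors_on H) \<le> card (PiE H (\<lambda>_. {-1, 0, 1 :: real}))"
    by (rule card_inj_on_le[OF inj into fin])
  also have "\<dots> = 3 ^ card H"
    using assms by (simp add: card_PiE numeral_3_eq_3)
  finally show "card (sign_vectors_on H) \<le> 3 ^ card H" .
qed

text \<open>Each such D is the set of a list of length k over Bs: an enumeration of D padded with
  repetitions of one of its elements.\<close>
lemma card_nonempty_subsets_le:
  assumes "finite Bs"
  shows "card {D. D \<subseteq> Bs \<and> D \<noteq> {} \<and> card D \<le> k} \<le> card Bs ^ k"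
proof -
  have "{D. D \<subseteq> Bs \<and> D \<noteq> {} \<and> card D \<le> k} \<subseteq> set ` {xs. set xs \<subseteq> Bs \<and> length xs = k}"
  proof
    fix D assume D: "D \<in> {D. D \<subseteq> Bs \<and> D \<noteq> {} \<and> card D \<le> k}"
    then have "finite D"
      using assms finite_subset by blast
    then obtain ds where ds: "set ds = D" "distinct ds"
      using finite_distinct_list by blast
    obtain d where "d \<in> D"
      using D by blast
    define xs where "xs = ds @ replicate (k - card D) d"
    have "set xs = D" "length xs = k"
      using D ds \<open>d \<in> D\<close> by (auto simp: xs_def distinct_card)
    with D show "D \<in> set ` {xs. set xs \<subseteq> Bs \<and> length xs = k}"
      by blast
  qed
  then have "card {D. D \<subseteq> Bs \<and> D \<noteq> {} \<and> card D \<le> k}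
      \<le> card (set ` {xs. set xs \<subseteq> Bs \<and> length xs = k})"
    using assms by (intro card_mono finite_imageI finite_lists_length_eq)
  also have "\<dots> \<le> card {xs. set xs \<subseteq> Bs \<and> length xs = k}"
    using assms by (intro card_image_le finite_lists_length_eq)
  also have "\<dots> = card Bs ^ k"
    using assms by (rule card_lists_length_eq)
  finally show ?thesis .
qed

section \<open>Gains of moves\<close>

lemma hs_weight_eq_sum_hit_sets: "hs_weight C n w S = (\<Sum>i\<in>hit_sets C n S. w i)"
  unfolding hs_weight_def hit_sets_def by (simp add: Int_commute)

lemma hs_weight_diff_eq_gain:
  "hs_weight C n w S' - hs_weight C n w S = (\<Sum>i<n. gain_vector C n S S' i * w i)"
proof -
  have weight_eq: "hs_weight C n w S = (\<Sum>i<n. of_bool (C i \<inter> S \<noteq> {}) * w i)" for S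
  proof -
    have "{i. i < n \<and> S \<inter> C i \<noteq> {}} = {..<n} \<inter> {i. C i \<inter> S \<noteq> {}}"
      by auto
    then show ?thesis
      by (simp add: hs_weight_def sum.inter_restrict)
  qed
  show ?thesis
    unfolding weight_eq gain_vector_def sum_subtractf[symmetric]
    by (intro sum.cong) (auto simp: left_diff_distrib)
qed

lemma hs_weight_bounds:
  assumes "\<And>i. i < n \<Longrightarrow> w i \<in> {0..1}"
  shows "0 \<le> hs_weight C n w S" "hs_weight C n w S \<le> real n"
proof -
  show "0 \<le> hs_weight C n w S"
    unfolding hs_weight_def using assms by (intro sum_nonneg) auto
  have "hs_weight C n w S \<le> real (card (hit_sets C n S))"
    unfolding hs_weight_eq_sum_hit_sets using assms
    by (intro sum_bounded_above[of _ _ 1, simplified]) (auto simp: hit_sets_def)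
  also have "\<dots> \<le> real n"
    by (intro of_nat_mono card_mono[of "{..<n}", simplified]) (auto simp: hit_sets_def)
  finally show "hs_weight C n w S \<le> real n" .
qed

lemma gain_vector_mem_gain_vectors:
  assumes "S \<subseteq> Bs" "S' \<subseteq> Bs" "S \<noteq> S'" "card (S' - S) + card (S - S') \<le> k" "finite Bs"
  shows "gain_vector C n S S' \<in> gain_vectors Bs C n k"
proof -
  define D where "D = (S' - S) \<union> (S - S')"
  have "D \<subseteq> Bs" "D \<noteq> {}"
    using assms(1-3) unfolding D_def by auto
  moreover have "card D \<le> k"
    unfolding D_def using card_Un_le[of "S' - S" "S - S'"] assms(4) by linarith
  moreover have "gain_vector C n S S' \<in> sign_vectors_on (hit_sets C n D)"
    unfolding sign_vectors_on_def hit_sets_def gain_vector_def D_def by auto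
  ultimately show ?thesis
    unfolding gain_vectors_def by blast
qed

lemma card_hit_sets_le:
  assumes "finite Bs" "D \<subseteq> Bs"
  shows "card (hit_sets C n D) \<le> card D * hs_B Bs C n"
proof -
  have "finite D"
    using assms finite_subset by blast
  have "hit_sets C n D = (\<Union>b\<in>D. {i. i < n \<and> b \<in> C i})"
    by (auto simp: hit_sets_def)
  then have "card (hit_sets C n D) \<le> (\<Sum>b\<in>D. card {i. i < n \<and> b \<in> C i})"
    using card_UN_le[OF \<open>finite D\<close>] by simp
  also have "\<dots> \<le> (\<Sum>b\<in>D. hs_B Bs C n)"
    using assms unfolding hs_B_def by (intro sum_mono Max_ge) auto
  finally show ?thesis
    by simp
qed

lemma finite_gain_vectors:
  assumes "finite Bs"
  shows "finite (gain_vectors Bs C n k)"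
  unfolding gain_vectors_def
proof (rule finite_UN_I)
  show "finite {D. D \<subseteq> Bs \<and> D \<noteq> {} \<and> card D \<le> k}"
    using assms by (rule rev_finite_subset[OF finite_Pow_iff[THEN iffD2]]) auto
  show "finite (sign_vectors_on (hit_sets C n D))" for D
    by (rule finite_and_card_sign_vectors_on) (simp add: hit_sets_def)
qed

lemma card_gain_vectors_le:
  assumes "finite Bs"
  shows "card (gain_vectors Bs C n k) \<le> card Bs ^ k * 3 ^ (k * hs_B Bs C n)"
proof -
  let ?Ds = "{D. D \<subseteq> Bs \<and> D \<noteq> {} \<and> card D \<le> k}"
  have "card (gain_vectors Bs C n k) \<le> (\<Sum>D\<in>?Ds. card (sign_vectors_on (hit_sets C n D)))"
    unfolding gain_vectors_def using assms by (intro card_UN_le) simp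
  also have "\<dots> \<le> (\<Sum>D\<in>?Ds. 3 ^ (k * hs_B Bs C n))"
  proof (rule sum_mono)
    fix D assume D: "D \<in> ?Ds"
    have "card (sign_vectors_on (hit_sets C n D)) \<le> 3 ^ card (hit_sets C n D)"
      by (rule finite_and_card_sign_vectors_on) (simp add: hit_sets_def)
    also have "\<dots> \<le> 3 ^ (k * hs_B Bs C n)"
    proof (rule power_increasing)
      have "card (hit_sets C n D) \<le> card D * hs_B Bs C n"
        using D by (intro card_hit_sets_le assms) simp
      also have "\<dots> \<le> k * hs_B Bs C n"
        using D by simp
      finally show "card (hit_sets C n D) \<le> k * hs_B Bs C n" .
    qed simp
    finally show "card (sign_vectors_on (hit_sets C n D)) \<le> 3 ^ (k * hs_B Bs C n)" .
  qed
  also have "\<dots> \<le> card Bs ^ k * 3 ^ (k * hs_B Bs C n)"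
    using card_nonempty_subsets_le[OF assms, of k] by simp
  finally show ?thesis .
qed

section \<open>Improving sequences\<close>

lemma hs_improving_seq_weight_less:
  assumes "hs_improving_seq Bs C n m k w xs" "i < j" "j < length xs"
  shows "hs_weight C n w (xs ! i) < hs_weight C n w (xs ! j)"
  using assms(2,3)
proof (induction j)
  case (Suc j)
  then have "hs_weight C n w (xs ! j) < hs_weight C n w (xs ! Suc j)"
    using assms(1) unfolding hs_improving_seq_def by auto
  with Suc show ?case
    by (cases "i = j") auto
qed simp

text \<open>The weights along an improving sequence are strictly increasing, and a weight is determined by
  the set of hit sets, so no hit set repeats.\<close>
lemma hs_improving_seq_length_le:
  assumes "hs_improving_seq Bs C n m k w xs"
  shows "length xs \<le> 2 ^ n"
proof -
  have "inj_on (\<lambda>j. hit_sets C n (xs ! j)) {..<length xs}"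
  proof (rule inj_onI)
    fix i j assume "i \<in> {..<length xs}" "j \<in> {..<length xs}"
      and "hit_sets C n (xs ! i) = hit_sets C n (xs ! j)"
    then show "i = j"
      using hs_improving_seq_weight_less[OF assms] hs_weight_eq_sum_hit_sets
      by (metis lessThan_iff less_irrefl nat_neq_iff)
  qed
  then have "card {..<length xs} \<le> card (Pow {..<n})"
    by (rule card_inj_on_le) (auto simp: hit_sets_def)
  then show ?thesis
    by (simp add: card_Pow)
qed

lemma hs_improving_seq_step:
  assumes "hs_improving_seq Bs C n m k w xs" "Suc s < length xs"
  shows "xs ! s \<subseteq> Bs" "xs ! Suc s \<subseteq> Bs"
    "card (xs ! Suc s - xs ! s) + card (xs ! s - xs ! Suc s) \<le> k"
    "hs_weight C n w (xs ! s) < hs_weight C n w (xs ! Suc s)"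
proof -
  have step: "hs_neighbour Bs m k (xs ! s) (xs ! Suc s)"
    "hs_weight C n w (xs ! s) < hs_weight C n w (xs ! Suc s)"
    using assms unfolding hs_improving_seq_def by auto
  then show "xs ! Suc s \<subseteq> Bs" "card (xs ! Suc s - xs ! s) + card (xs ! s - xs ! Suc s) \<le> k"
    "hs_weight C n w (xs ! s) < hs_weight C n w (xs ! Suc s)"
    unfolding hs_neighbour_def hs_feasible_def by auto
  show "xs ! s \<subseteq> Bs"
  proof (cases s)
    case 0
    then show ?thesis
      using assms unfolding hs_improving_seq_def hs_feasible_def by (auto simp: hd_conv_nth[symmetric])
  next
    case (Suc s')
    then show ?thesis
      using assms unfolding hs_improving_seq_def hs_neighbour_def hs_feasible_def by auto
  qed
qed

lemma hs_max_iter_le_small_gains: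
  assumes "finite Bs" and unit: "\<And>i. i < n \<Longrightarrow> w i \<in> {0..1}"
  shows "hs_max_iter Bs C n m k w
    \<le> (\<Sum>j<n. 2 ^ j * (\<Sum>a\<in>gain_vectors Bs C n k. indicator (small_gain n a (real n / 2 ^ j)) w))"
  unfolding hs_max_iter_def
proof (rule SUP_least)
  fix xs assume "xs \<in> {xs. hs_improving_seq Bs C n m k w xs}"
  then have xs: "hs_improving_seq Bs C n m k w xs"
    by simp
  define T where "T = length xs - 1"
  have "xs \<noteq> []"
    using xs by (simp add: hs_improving_seq_def)
  then have "T < 2 ^ n"
    using hs_improving_seq_length_le[OF xs] unfolding T_def by (cases xs) auto
  define W where "W s = hs_weight C n w (xs ! s)" for s
  have small: "\<exists>a\<in>gain_vectors Bs C n k. w \<in> small_gain n a (real n / 2 ^ j)"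
    if "2 ^ j \<le> T" for j
  proof -
    have "0 < T"
      using that by (metis le_zero_eq not_gr0 power_not_zero zero_neq_numeral)
    moreover have "W T - W 0 \<le> real n"
      using hs_weight_bounds[of n w, OF unit] unfolding W_def by (smt (verit))
    ultimately obtain s where s: "s < T" "W (Suc s) - W s \<le> real n / real T"
      using exists_small_increment[of T W "real n"] by blast
    note \<open>W (Suc s) - W s \<le> real n / real T\<close>
    also have "\<dots> \<le> real n / 2 ^ j"
    proof (rule divide_left_mono)
      show "(2::real) ^ j \<le> real T"
        using that by (metis of_nat_le_iff of_nat_numeral of_nat_power)
    qed (use \<open>0 < T\<close> in auto)
    finally have le: "W (Suc s) - W s \<le> real n / 2 ^ j" .
    have "Suc s < length xs"
      using s(1) unfolding T_def by simp
    note step = hs_improving_seq_step[OF xs this]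
    let ?a = "gain_vector C n (xs ! s) (xs ! Suc s)"
    have "?a \<in> gain_vectors Bs C n k"
      using step by (intro gain_vector_mem_gain_vectors[OF step(1,2)] \<open>finite Bs\<close>) auto
    moreover have "w \<in> small_gain n ?a (real n / 2 ^ j)"
      using le step(4) unfolding small_gain_def W_def hs_weight_diff_eq_gain[symmetric] by simp
    ultimately show ?thesis by blast
  qed
  have "of_nat (length xs - 1) \<le> (of_nat (\<Sum>j<n. if 2 ^ j \<le> T then 2 ^ j else 0 :: nat) :: ennreal)"
    using le_sum_powers_of_two_below[OF \<open>T < 2 ^ n\<close>] unfolding T_def by (simp only: of_nat_le_iff)
  also have "\<dots> \<le> (\<Sum>j<n. 2 ^ j * (\<Sum>a\<in>gain_vectors Bs C n k. indicator (small_gain n a (real n / 2 ^ j)) w))"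
    unfolding of_nat_sum
  proof (rule sum_mono)
    fix j
    show "of_nat (if 2 ^ j \<le> T then 2 ^ j else 0) \<le>
      (2::ennreal) ^ j * (\<Sum>a\<in>gain_vectors Bs C n k. indicator (small_gain n a (real n / 2 ^ j)) w)"
    proof (cases "2 ^ j \<le> T")
      case True
      then obtain a where "a \<in> gain_vectors Bs C n k" "w \<in> small_gain n a (real n / 2 ^ j)"
        using small by blast
      then have "1 \<le> (\<Sum>a\<in>gain_vectors Bs C n k. indicator (small_gain n a (real n / 2 ^ j)) w :: ennreal)"
        using member_le_sum[of a "gain_vectors Bs C n k" "\<lambda>a. indicator (small_gain n a (real n / 2 ^ j)) w :: ennreal"]
          finite_gain_vectors[OF \<open>finite Bs\<close>] by (simp add: zero_le)
      then have "(2::ennreal) ^ j * 1 \<le> 2 ^ j *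
          (\<Sum>a\<in>gain_vectors Bs C n k. indicator (small_gain n a (real n / 2 ^ j)) w)"
        by (rule mult_left_mono) simp
      then show ?thesis
        using True by simp
    qed simp
  qed
  finally show "of_nat (length xs - 1) \<le> (\<Sum>j<n. (2::ennreal) ^ j *
      (\<Sum>a\<in>gain_vectors Bs C n k. indicator (small_gain n a (real n / 2 ^ j)) w))" .
qed

section \<open>Small gains are unlikely\<close>

definition bounded_density :: "real \<Rightarrow> (real \<Rightarrow> real) \<Rightarrow> bool" where
  "bounded_density \<phi> g \<longleftrightarrow> g \<in> borel_measurable borel \<and> (\<forall>x. 0 \<le> g x \<and> g x \<le> \<phi>) \<and>
     (\<integral>\<^sup>+x. ennreal (g x) \<partial>lborel) = 1"

lemma prob_space_bounded_density:
  assumes "bounded_density \<phi> g"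
  shows "prob_space (density lborel (\<lambda>x. ennreal (g x)))"
proof -
  have "(\<lambda>x. ennreal (g x)) \<in> borel_measurable lborel"
    using assms by (simp add: bounded_density_def)
  then show ?thesis
    using assms by (intro prob_spaceI) (simp add: emeasure_density bounded_density_def)
qed

lemma AE_PiM_bounded_density_unit_interval:
  fixes f :: "nat \<Rightarrow> real \<Rightarrow> real"
  assumes "\<And>i. i < n \<Longrightarrow> bounded_density \<phi> (f i)"
    and "\<And>i x. i < n \<Longrightarrow> x \<notin> {0..1} \<Longrightarrow> f i x = 0"
  shows "AE w in PiM {..<n} (\<lambda>i. density lborel (\<lambda>x. ennreal (f i x))). \<forall>i<n. w i \<in> {0..1}"
proof -
  have component: "AE w in PiM {..<n} (\<lambda>i. density lborel (\<lambda>x. ennreal (f i x))). w i \<in> {0..1}"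
    if i: "i < n" for i
  proof (rule AE_PiM_component)
    have m: "(\<lambda>x. ennreal (f i x)) \<in> borel_measurable lborel"
      using assms(1)[OF i] by (simp add: bounded_density_def)
    show "AE x in density lborel (\<lambda>x. ennreal (f i x)). x \<in> {0..1}"
      unfolding AE_density[OF m] by (intro AE_I2 impI) (use assms(2)[OF i] in force)
  qed (use i assms(1) prob_space_bounded_density in auto)
  have "AE w in PiM {..<n} (\<lambda>i. density lborel (\<lambda>x. ennreal (f i x))). \<forall>i\<in>{..<n}. w i \<in> {0..1}"
  proof (rule AE_finite_allI)
    fix i assume "i \<in> {..<n}"
    then show "AE w in PiM {..<n} (\<lambda>i. density lborel (\<lambda>x. ennreal (f i x))). w i \<in> {0..1}"
      by (intro component) simp
  qed simp
  then show ?thesis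
    by (rule eventually_mono) simp
qed

lemma nn_integral_bounded_density_window_le:
  assumes "bounded_density \<phi> g" "a = 1 \<or> a = -1" "0 \<le> \<epsilon>"
  shows "(\<integral>\<^sup>+y. indicator {y. 0 < a * y + c \<and> a * y + c \<le> \<epsilon>} y \<partial>density lborel (\<lambda>x. ennreal (g x)))
    \<le> ennreal (\<phi> * \<epsilon>)"
proof -
  define T where "T = {y. 0 < a * y + c \<and> a * y + c \<le> \<epsilon>}"
  have "T = {- c <.. \<epsilon> - c} \<or> T = {c - \<epsilon> ..< c}"
    using assms(2) unfolding T_def by (auto simp: algebra_simps)
  then have T: "T \<in> sets lborel" "emeasure lborel T = ennreal \<epsilon>"
    using assms(3) by auto
  have g: "g \<in> borel_measurable borel" "\<And>x. 0 \<le> g x \<and> g x \<le> \<phi>"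
    using assms(1) by (auto simp: bounded_density_def)
  have "(\<integral>\<^sup>+y. indicator T y \<partial>density lborel (\<lambda>x. ennreal (g x)))
      = (\<integral>\<^sup>+y. ennreal (g y) * indicator T y \<partial>lborel)"
    using T(1) g(1) by (intro nn_integral_density) auto
  also have "\<dots> \<le> (\<integral>\<^sup>+y. ennreal \<phi> * indicator T y \<partial>lborel)"
    using g(2) by (intro nn_integral_mono) (auto simp: indicator_def intro: ennreal_leI)
  also have "\<dots> = ennreal (\<phi> * \<epsilon>)"
    using T g(2)[of 0] assms(3) by (simp add: nn_integral_cmult_indicator ennreal_mult)
  finally show ?thesis
    unfolding T_def .
qed

lemma borel_measurable_indicator_small_gain:
  assumes "\<And>i. sets (M i) = sets borel"
  shows "(\<lambda>w. indicator (small_gain n a \<epsilon>) w :: ennreal) \<in> borel_measurable (PiM {..<n} M)"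
proof -
  define S where "S w = (\<Sum>i<n. a i * w i)" for w :: "nat \<Rightarrow> real"
  have "S \<in> borel_measurable (PiM {..<n} M)"
    unfolding S_def
  proof (intro borel_measurable_sum borel_measurable_times borel_measurable_const)
    fix i assume "i \<in> {..<n}"
    then show "(\<lambda>w. w i) \<in> borel_measurable (PiM {..<n} M)"
      by (subst measurable_cong_sets[OF refl assms[of i, symmetric]])
        (rule measurable_component_singleton)
  qed
  then have "{w \<in> space (PiM {..<n} M). 0 < S w \<and> S w \<le> \<epsilon>} \<in> sets (PiM {..<n} M)"
    by measurable
  also have "{w \<in> space (PiM {..<n} M). 0 < S w \<and> S w \<le> \<epsilon>}
      = {w \<in> space (PiM {..<n} M). w \<in> small_gain n a \<epsilon>}"
    by (simp add: small_gain_def S_def)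
  finally show ?thesis
    by (rule borel_measurable_indicator'[where f = "\<lambda>w. w"])
qed

text \<open>Integrate out the coordinate j first: for fixed other coordinates the window is an interval of
  length \<epsilon> in w j.\<close>
lemma nn_integral_small_gain_le_unit_coordinate:
  assumes dens: "\<And>i. i < n \<Longrightarrow> bounded_density \<phi> (f i)"
    and j: "j < n" "a j = 1 \<or> a j = -1" and "0 \<le> \<epsilon>"
  shows "(\<integral>\<^sup>+w. indicator (small_gain n a \<epsilon>) w
      \<partial>PiM {..<n} (\<lambda>i. density lborel (\<lambda>x. ennreal (f i x)))) \<le> ennreal (\<phi> * \<epsilon>)"
proof -
  define M where "M i = (if i < n then density lborel (\<lambda>x. ennreal (f i x)) else return lborel 0)" for i
  have "prob_space (M i)" for i
    by (cases "i < n") (auto simp: M_def prob_space_return intro: prob_space_bounded_density dens)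
  then interpret product_prob_space M "{..<n}"
    by (rule product_prob_spaceI)
  have sets_M: "sets (M i) = sets borel" for i
    by (simp add: M_def)
  define J where "J = {..<n} - {j}"
  have insert_J: "{..<n} = insert j J"
    using j by (auto simp: J_def)
  have inner: "(\<integral>\<^sup>+y. indicator (small_gain n a \<epsilon>) (x(j := y)) \<partial>M j) \<le> ennreal (\<phi> * \<epsilon>)" for x
  proof -
    define c where "c = (\<Sum>i\<in>J. a i * x i)"
    have "(\<Sum>i<n. a i * (x(j := y)) i) = a j * y + c" for y
      unfolding insert_J c_def by (subst sum.insert) (auto simp: J_def intro!: sum.cong)
    then have "indicator (small_gain n a \<epsilon>) (x(j := y)) =
        (indicator {y. 0 < a j * y + c \<and> a j * y + c \<le> \<epsilon>} y :: ennreal)" for y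
      by (simp add: small_gain_def indicator_def)
    then show ?thesis
      using nn_integral_bounded_density_window_le[OF dens j(2) \<open>0 \<le> \<epsilon>\<close>] j(1)
      by (simp add: M_def)
  qed
  have "(\<integral>\<^sup>+w. indicator (small_gain n a \<epsilon>) w \<partial>PiM {..<n} M)
      = (\<integral>\<^sup>+x. \<integral>\<^sup>+y. indicator (small_gain n a \<epsilon>) (x(j := y)) \<partial>M j \<partial>PiM J M)"
    unfolding insert_J
  proof (rule product_nn_integral_insert)
    show "(\<lambda>w. indicator (small_gain n a \<epsilon>) w :: ennreal) \<in> borel_measurable (PiM (insert j J) M)"
      using borel_measurable_indicator_small_gain[of M n a \<epsilon>, OF sets_M] by (simp only: insert_J)
  qed (auto simp: J_def)
  also have "\<dots> \<le> (\<integral>\<^sup>+x. ennreal (\<phi> * \<epsilon>) \<partial>PiM J M)"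
    by (intro nn_integral_mono inner)
  also have "\<dots> = ennreal (\<phi> * \<epsilon>)"
    using prob_space.emeasure_space_1[OF prob_space_PiM[of J M]] \<open>\<And>i. prob_space (M i)\<close> by simp
  also have "PiM {..<n} M = PiM {..<n} (\<lambda>i. density lborel (\<lambda>x. ennreal (f i x)))"
    by (rule PiM_cong) (auto simp: M_def)
  finally show ?thesis .
qed

text \<open>A zero coefficient vector gives an empty window, so no unit coordinate is needed then.\<close>
lemma nn_integral_small_gain_le:
  assumes "\<And>i. i < n \<Longrightarrow> bounded_density \<phi> (f i)"
    and "\<And>i. i < n \<Longrightarrow> a i \<in> {-1, 0, 1}" "0 \<le> \<epsilon>"
  shows "(\<integral>\<^sup>+w. indicator (small_gain n a \<epsilon>) w
      \<partial>PiM {..<n} (\<lambda>i. density lborel (\<lambda>x. ennreal (f i x)))) \<le> ennreal (\<phi> * \<epsilon>)"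
proof (cases "\<exists>j<n. a j \<noteq> 0")
  case True
  then obtain j where "j < n" "a j = 1 \<or> a j = -1"
    using assms(2) by auto
  then show ?thesis
    using assms(1,3) nn_integral_small_gain_le_unit_coordinate by blast
next
  case False
  then have "small_gain n a \<epsilon> = {}"
    by (simp add: small_gain_def)
  then show ?thesis
    by simp
qed

section \<open>Expected number of iterations\<close>

lemma expected_hs_max_iter_le:
  fixes f :: "nat \<Rightarrow> real \<Rightarrow> real"
  assumes "finite Bs" and dens: "\<And>i. i < n \<Longrightarrow> bounded_density \<phi> (f i)"
    and "\<And>i x. i < n \<Longrightarrow> x \<notin> {0..1} \<Longrightarrow> f i x = 0"
  shows "(\<integral>\<^sup>+w. hs_max_iter Bs C n m k w \<partial>PiM {..<n} (\<lambda>i. density lborel (\<lambda>x. ennreal (f i x))))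
    \<le> ennreal (3 ^ (k * hs_B Bs C n) * real (card Bs) ^ k * real n ^ 2 * \<phi>)"
proof -
  let ?\<mu> = "PiM {..<n} (\<lambda>i. density lborel (\<lambda>x. ennreal (f i x)))"
  let ?F = "gain_vectors Bs C n k"
  let ?I = "\<lambda>j a w. indicator (small_gain n a (real n / 2 ^ j)) w :: ennreal"
  have \<phi>_nonneg: "0 \<le> \<phi>" if "0 < n"
    using dens[OF that] unfolding bounded_density_def by (meson order_trans)
  have meas: "?I j a \<in> borel_measurable ?\<mu>" for j a
    by (rule borel_measurable_indicator_small_gain) simp
  have "(\<integral>\<^sup>+w. hs_max_iter Bs C n m k w \<partial>?\<mu>) \<le> (\<integral>\<^sup>+w. (\<Sum>j<n. 2 ^ j * (\<Sum>a\<in>?F. ?I j a w)) \<partial>?\<mu>)"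
    using AE_PiM_bounded_density_unit_interval[of n \<phi> f, OF assms(2,3)]
    by (intro nn_integral_mono_AE) (auto elim!: eventually_mono intro: hs_max_iter_le_small_gains \<open>finite Bs\<close>)
  also have "\<dots> = (\<Sum>j<n. 2 ^ j * (\<Sum>a\<in>?F. \<integral>\<^sup>+w. ?I j a w \<partial>?\<mu>))"
    using meas by (simp add: nn_integral_sum nn_integral_cmult borel_measurable_sum)
  also have "\<dots> \<le> (\<Sum>j<n. 2 ^ j * (\<Sum>a\<in>?F. ennreal (\<phi> * (real n / 2 ^ j))))"
    using dens by (intro sum_mono mult_left_mono nn_integral_small_gain_le)
      (auto simp: gain_vectors_def sign_vectors_on_def)
  also have "\<dots> = (\<Sum>j<n. ennreal (real (card ?F) * \<phi> * real n))"
  proof (rule sum.cong)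
    fix j assume "j \<in> {..<n}"
    moreover have "(2::ennreal) ^ j = ennreal (2 ^ j)"
      using ennreal_power[of 2 j] by simp
    ultimately show "2 ^ j * (\<Sum>a\<in>?F. ennreal (\<phi> * (real n / 2 ^ j))) = ennreal (real (card ?F) * \<phi> * real n)"
      using \<phi>_nonneg by (simp add: ennreal_of_nat_eq_real_of_nat ennreal_mult[symmetric])
  qed simp
  also have "\<dots> = ennreal (real (card ?F) * (real n ^ 2 * \<phi>))"
    by (simp add: ennreal_of_nat_eq_real_of_nat ennreal_mult'[symmetric] power2_eq_square mult_ac)
  also have "\<dots> \<le> ennreal (real (card Bs ^ k * 3 ^ (k * hs_B Bs C n)) * (real n ^ 2 * \<phi>))"
  proof (intro ennreal_leI mult_right_mono)
    show "real (card ?F) \<le> real (card Bs ^ k * 3 ^ (k * hs_B Bs C n))"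
      using card_gain_vectors_le[OF \<open>finite Bs\<close>] by (rule of_nat_mono)
    show "0 \<le> real n ^ 2 * \<phi>"
      using \<phi>_nonneg by (cases "n = 0") auto
  qed
  finally show ?thesis
    by (simp add: mult_ac)
qed

theorem mainTheorem16:
  shows "\<exists>c::real. \<forall>(Bs::nat set) (C::nat \<Rightarrow> nat set) (n::nat) (m::nat) (k::nat)
      (f::nat \<Rightarrow> real \<Rightarrow> real) (\<phi>::real).
    finite Bs \<and> (\<forall>i<n. C i \<subseteq> Bs) \<and>
    (\<forall>i<n. f i \<in> borel_measurable borel \<and> (\<forall>x. 0 \<le> f i x \<and> f i x \<le> \<phi>) \<and>
           (\<forall>x. x \<notin> {0..1} \<longrightarrow> f i x = 0) \<and>
           (\<integral>\<^sup>+ x. ennreal (f i x) \<partial>lborel) = 1)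
    \<longrightarrow> (\<integral>\<^sup>+ w. hs_max_iter Bs C n m k w
            \<partial>(PiM {..<n} (\<lambda>i. density lborel (\<lambda>x. ennreal (f i x)))))
        \<le> ennreal (c * 3 ^ (k * hs_B Bs C n) * real (card Bs) ^ k * real n ^ 2 * \<phi>)"
  by (intro exI[of _ 1] allI impI, unfold mult_1, elim conjE, rule expected_hs_max_iter_le)
    (auto simp: bounded_density_def)

end
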